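(* Let $\lambda\in(0,1]$, $x=3\lambda/2$ and $y=(2\lambda-x)/2=\lambda/4$. Place a coordinate system with origin at a point $o$ ($x$-axis pointing East, $y$-axis pointing North) and consider the eight open squares with horizontal and vertical sides of side length $x$ centered at $(0,\pm(\lambda+x/2))$, $(\pm(\lambda+x/2),0)$, and $(\pm(x+y),\pm(\lambda+x/2))$ (all four sign combinations), i.e. the gadget $G(o)$. Let $S(o)$ be the convex hull of these eight squares, a square of side $3x+2y$ centered at $o$. Then for every point $a$ not in $S(o)$, the segment $ao$ meets the interior of at least one of the eight squares; in particular, if these squares are obstacles of a terrain, an agent located outside $S(o)$ cannot see $o$.
   Context: An agent at a point $a$ of a terrain sees a point $b$ only if the segment $ab$ is contained in the terrain (and has length at most $1$); obstacles are open sets removed from the terrain. *)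

theory Defs
  imports "HOL-Analysis.Analysis"
begin

definition open_square :: "real \<times> real \<Rightarrow> real \<Rightarrow> (real \<times> real) set" where
  "open_square c s = {p. \<bar>fst p - fst c\<bar> < s / 2 \<and> \<bar>snd p - snd c\<bar> < s / 2}"

definition gad_x :: "real \<Rightarrow> real" where
  "gad_x lam = 3 * lam / 2"

definition gad_y :: "real \<Rightarrow> real" where
  "gad_y lam = (2 * lam - gad_x lam) / 2"

definition gadget_centers :: "real \<Rightarrow> (real \<times> real) set" where
  "gadget_centers lam =
     (let x = gad_x lam; y = gad_y lam; h = lam + x / 2 in
      {(0, h), (0, -h), (h, 0), (-h, 0),
       (x + y, h), (x + y, -h), (-(x + y), h), (-(x + y), -h)})"

definition gadget :: "real \<Rightarrow> real \<times> real \<Rightarrow> (real \<times> real) set set" where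
  "gadget lam p0 = (\<lambda>c. open_square (p0 + c) (gad_x lam)) ` gadget_centers lam"

definition gadget_hull :: "real \<Rightarrow> real \<times> real \<Rightarrow> (real \<times> real) set" where
  "gadget_hull lam p0 = convex hull (\<Union> (gadget lam p0))"

end

theory Submission
  imports Defs
begin

text \<open>
  With \<open>h = 7\<lambda>/4\<close> the eight centres are the nonzero points of the grid \<open>{-h, 0, h}\<^sup>2\<close>
  and every square has half-side \<open>3\<lambda>/4\<close>, so \<open>S(o)\<close> contains the open box of half-side
  \<open>5\<lambda>/2\<close> around \<open>o\<close>. If \<open>a - o = (d\<^sub>1, d\<^sub>2)\<close> lies outside this box, say
  \<open>|d\<^sub>1| \<le> |d\<^sub>2| = D \<ge> 5\<lambda>/2\<close>, move along the segment from \<open>o\<close> to the point where the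
  dominant coordinate has modulus \<open>11\<lambda>/10\<close> if \<open>|d\<^sub>1| < 7D/11\<close>, and \<open>12\<lambda>/5\<close> otherwise.
  In the first case the other coordinate is then within \<open>3\<lambda>/4\<close> of \<open>0\<close>, in the second
  it has modulus in \<open>[84\<lambda>/55, 12\<lambda>/5]\<close> and is within \<open>3\<lambda>/4\<close> of \<open>\<plusminus>h\<close>; either way the
  point lies in one of the squares.
\<close>

lemma open_open_square: "open (open_square c s)"
  unfolding open_square_def
  by (intro open_Collect_conj open_Collect_less continuous_intros)

lemma gad_x_half: "gad_x lam / 2 = 3 * lam / 4"
  by (simp add: gad_x_def)

lemma grid_point_in_gadget_centers:
  assumes "i \<in> {-1, 0, 1}" "j \<in> {-1, 0, 1}" "(i, j) \<noteq> (0, 0)"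
  shows "(i * (7 * lam / 4), j * (7 * lam / 4)) \<in> gadget_centers lam"
proof -
  define h where "h = 7 * lam / 4"
  have "gadget_centers lam = {(0, h), (0, -h), (h, 0), (-h, 0), (h, h), (h, -h), (-h, h), (-h, -h)}"
    by (simp add: gadget_centers_def gad_x_def gad_y_def Let_def h_def)
  with assms show ?thesis
    unfolding h_def[symmetric] by (elim insertE emptyE) simp_all
qed

lemma near_grid_point_in_Union_gadget:
  assumes "i \<in> {-1, 0, 1}" "j \<in> {-1, 0, 1}" "(i, j) \<noteq> (0, 0)"
    and "\<bar>u - i * (7 * lam / 4)\<bar> < 3 * lam / 4" "\<bar>v - j * (7 * lam / 4)\<bar> < 3 * lam / 4"
  shows "p0 + (u, v) \<in> \<Union> (gadget lam p0)"
proof -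
  have "p0 + (u, v) \<in> open_square (p0 + (i * (7 * lam / 4), j * (7 * lam / 4))) (gad_x lam)"
    using assms(4,5) by (simp add: open_square_def gad_x_half)
  then show ?thesis
    using grid_point_in_gadget_centers[OF assms(1-3)] by (auto simp: gadget_def)
qed

lemma convex_hull_Times_doubletons:
  fixes a b :: "'a::real_vector" and c d :: "'b::real_vector"
  shows "convex hull ({a, b} \<times> {c, d}) = closed_segment a b \<times> closed_segment c d"
  unfolding segment_convex_hull by (rule convex_hull_Times)

lemma in_gadget_hull_if_in_box:
  assumes "0 < lam" "\<bar>u\<bar> < 5 * lam / 2" "\<bar>v\<bar> < 5 * lam / 2"
  shows "p0 + (u, v) \<in> gadget_hull lam p0"
proof -
  define m where "m = max (max \<bar>u\<bar> \<bar>v\<bar>) (2 * lam)"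
  have m: "lam < m" "m < 5 * lam / 2" "\<bar>u\<bar> \<le> m" "\<bar>v\<bar> \<le> m"
    using assms by (auto simp: m_def)
  have corner: "p0 + (s * m, r * m) \<in> \<Union> (gadget lam p0)"
    if "s \<in> {-1, 1}" "r \<in> {-1, 1}" for s r :: real
  proof -
    have "\<bar>s * m - s * (7 * lam / 4)\<bar> < 3 * lam / 4" "\<bar>r * m - r * (7 * lam / 4)\<bar> < 3 * lam / 4"
      using that m by (auto split: abs_split)
    then show ?thesis
      using that by (intro near_grid_point_in_Union_gadget) auto
  qed
  have corners: "(\<lambda>q. p0 + q) ` ({-m, m} \<times> {-m, m}) \<subseteq> \<Union> (gadget lam p0)"
    using corner[of "-1" "-1"] corner[of "-1" 1] corner[of 1 "-1"] corner[of 1 1] by auto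
  have "(u, v) \<in> convex hull ({-m, m} \<times> {-m, m})"
    unfolding convex_hull_Times_doubletons using m by (simp add: closed_segment_eq_real_ivl abs_le_iff)
  then have "p0 + (u, v) \<in> (\<lambda>q. p0 + q) ` (convex hull ({-m, m} \<times> {-m, m}))"
    by (rule imageI)
  also have "\<dots> = convex hull ((\<lambda>q. p0 + q) ` ({-m, m} \<times> {-m, m}))"
    by (rule convex_hull_translation[symmetric])
  also have "\<dots> \<subseteq> gadget_hull lam p0"
    unfolding gadget_hull_def by (rule hull_mono[OF corners])
  finally show ?thesis .
qed

lemma abs_mult_sub_sgn:
  fixes t x c :: real
  assumes "x \<noteq> 0"
  shows "\<bar>t * x - sgn x * c\<bar> = \<bar>t * \<bar>x\<bar> - c\<bar>"
  using assms by (cases "x < 0") (auto simp: abs_minus_commute)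

lemma ray_point_near_grid:
  fixes lam D E :: real
  assumes "0 < lam" "5 * lam / 2 \<le> \<bar>D\<bar>" "\<bar>E\<bar> \<le> \<bar>D\<bar>"
  obtains t k where "t \<in> {0..1}" "k \<in> {-1, 0, 1}"
    "\<bar>t * D - sgn D * (7 * lam / 4)\<bar> < 3 * lam / 4"
    "\<bar>t * E - k * (7 * lam / 4)\<bar> < 3 * lam / 4"
proof -
  have "D \<noteq> 0" using assms by auto
  show ?thesis
  proof (cases "11 * \<bar>E\<bar> < 7 * \<bar>D\<bar>")
    case True
    define t where "t = 11 * lam / (10 * \<bar>D\<bar>)"
    have tD: "t * \<bar>D\<bar> = 11 * lam / 10"
      using \<open>D \<noteq> 0\<close> by (simp add: t_def)
    have "t \<in> {0..1}"
      using assms by (auto simp: t_def)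
    moreover have "\<bar>t * D - sgn D * (7 * lam / 4)\<bar> < 3 * lam / 4"
      unfolding abs_mult_sub_sgn[OF \<open>D \<noteq> 0\<close>] using tD assms(1) by simp
    moreover have "\<bar>t * E\<bar> < 3 * lam / 4"
    proof -
      have "0 < t"
        using assms(1) \<open>D \<noteq> 0\<close> by (simp add: t_def)
      then have "t * (11 * \<bar>E\<bar>) < t * (7 * \<bar>D\<bar>)"
        using True by (intro mult_strict_left_mono)
      then have "11 * (t * \<bar>E\<bar>) < 7 * (t * \<bar>D\<bar>)"
        by (metis mult.left_commute)
      then show ?thesis
        using tD \<open>0 < t\<close> assms(1) by (simp add: abs_mult)
    qed
    ultimately show ?thesis
      using that[of t 0] by simp
  next
    case False
    define t where "t = 12 * lam / (5 * \<bar>D\<bar>)"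
    have tD: "t * \<bar>D\<bar> = 12 * lam / 5"
      using \<open>D \<noteq> 0\<close> by (simp add: t_def)
    have "t \<in> {0..1}"
      using assms by (auto simp: t_def)
    have "E \<noteq> 0"
      using False \<open>D \<noteq> 0\<close> by auto
    have "t * (7 * \<bar>D\<bar>) \<le> t * (11 * \<bar>E\<bar>)" "t * \<bar>E\<bar> \<le> t * \<bar>D\<bar>"
      using False assms(3) \<open>t \<in> {0..1}\<close> by (auto intro: mult_left_mono)
    then have "7 * (t * \<bar>D\<bar>) \<le> 11 * (t * \<bar>E\<bar>)" "t * \<bar>E\<bar> \<le> t * \<bar>D\<bar>"
      by (metis mult.left_commute)+
    then have "\<bar>t * E - sgn E * (7 * lam / 4)\<bar> < 3 * lam / 4"
      unfolding abs_mult_sub_sgn[OF \<open>E \<noteq> 0\<close>] abs_less_iff using tD assms(1) by linarith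
    moreover have "\<bar>t * D - sgn D * (7 * lam / 4)\<bar> < 3 * lam / 4"
      unfolding abs_mult_sub_sgn[OF \<open>D \<noteq> 0\<close>] using tD assms(1) by simp
    moreover have "sgn E \<in> {-1, 0, 1}"
      by (simp add: sgn_real_def)
    ultimately show ?thesis
      using that[of t "sgn E"] \<open>t \<in> {0..1}\<close> by blast
  qed
qed

lemma ray_meets_Union_gadget:
  fixes lam D E :: real
  assumes "0 < lam" "5 * lam / 2 \<le> \<bar>D\<bar>" "\<bar>E\<bar> \<le> \<bar>D\<bar>"
  obtains t where "t \<in> {0..1}"
    "p0 + (t * D, t * E) \<in> \<Union> (gadget lam p0)" "p0 + (t * E, t * D) \<in> \<Union> (gadget lam p0)"
proof -
  obtain t k where t: "t \<in> {0..1}" and k: "k \<in> {-1, 0, 1}"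
    and near: "\<bar>t * D - sgn D * (7 * lam / 4)\<bar> < 3 * lam / 4" "\<bar>t * E - k * (7 * lam / 4)\<bar> < 3 * lam / 4"
    using ray_point_near_grid[OF assms] .
  have sgn: "sgn D \<in> {-1, 1}"
    using assms(1,2) by (auto simp: sgn_real_def)
  have "p0 + (t * D, t * E) \<in> \<Union> (gadget lam p0)"
    by (rule near_grid_point_in_Union_gadget[of "sgn D" k]) (use sgn k near in auto)
  moreover have "p0 + (t * E, t * D) \<in> \<Union> (gadget lam p0)"
    by (rule near_grid_point_in_Union_gadget[of k "sgn D"]) (use sgn k near in auto)
  ultimately show ?thesis
    by (rule that[OF t])
qed

lemma segment_meets_gadget:
  assumes "t \<in> {0..1}" "p0 + t *\<^sub>R d \<in> \<Union> (gadget lam p0)"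
  shows "\<exists>Q \<in> gadget lam p0. closed_segment (p0 + d) p0 \<inter> interior Q \<noteq> {}"
proof -
  have "p0 + t *\<^sub>R d \<in> closed_segment (p0 + d) p0"
    using assms(1) unfolding in_segment by (intro exI[of _ "1 - t"]) (auto simp: algebra_simps)
  with assms(2) show ?thesis
    using open_open_square by (auto simp: gadget_def interior_open)
qed

theorem lemma2p4:
  fixes lam :: real and p0 a :: "real \<times> real"
  assumes "0 < lam" and "lam \<le> 1"
    and "a \<notin> gadget_hull lam p0"
  shows "\<exists>Q \<in> gadget lam p0. closed_segment a p0 \<inter> interior Q \<noteq> {}"
proof -
  obtain d1 d2 where a: "a = p0 + (d1, d2)"
    by (metis add.commute diff_add_cancel surj_pair)
  have far: "5 * lam / 2 \<le> \<bar>d1\<bar> \<or> 5 * lam / 2 \<le> \<bar>d2\<bar>"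
    using in_gadget_hull_if_in_box[OF assms(1), of d1 d2 p0] assms(3) a by (meson not_le)
  obtain t where "t \<in> {0..1}" "p0 + (t * d1, t * d2) \<in> \<Union> (gadget lam p0)"
  proof (cases "\<bar>d1\<bar> \<le> \<bar>d2\<bar>")
    case True
    with far have "5 * lam / 2 \<le> \<bar>d2\<bar>" by linarith
    with True show ?thesis
      using ray_meets_Union_gadget[OF assms(1)] that by metis
  next
    case False
    with far have "5 * lam / 2 \<le> \<bar>d1\<bar>" by linarith
    with False show ?thesis
      using ray_meets_Union_gadget[OF assms(1)] that by (metis linorder_le_cases)
  qed
  then show ?thesis
    unfolding a using segment_meets_gadget by simp
qed

end
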